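(* Let $d>2$ and let $J_x,J_y$ be the generators of rotations in the irreducible spin-$J$ representation of $SU(2)$ on a $d$-dimensional Hilbert space, $d=2J+1$. Then the Lie algebra generated by $\{J_x,J_y,T^{(2)}_0\}$ is $\mathfrak{su}(d)$.
   Context: For the spin-$J$ representation with basis $\{|J,m\rangle\}_{m=-J}^{J}$, the irreducible spherical tensor operators are $T^{(k)}_q(J)=\sqrt{\frac{2k+1}{2J+1}}\sum_m \langle J,m+q|k,q;J,m\rangle\,|J,m+q\rangle\langle J,m|$ for $0\le k\le 2J$, $-k\le q\le k$, with $\langle\cdot|\cdot\rangle$ Clebsch–Gordan coefficients; in particular $T^{(2)}_0$ is the rank-2, $q=0$ tensor. "The Lie algebra generated by a set of Hermitian operators $\{H_1,\dots,H_n\}$" means the smallest real vector space of operators containing $-iH_1,\dots,-iH_n$ and closed under commutators; $\mathfrak{su}(d)$ is the Lie algebra of traceless anti-Hermitian $d\times d$ matrices. *)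

theory Defs
  imports Complex_Main "Jordan_Normal_Form.Matrix"
begin

text \<open>Angular-momentum quantum numbers are encoded by twice their value
  (integers), so half-integers are represented exactly.\<close>

definition hfact :: "int \<Rightarrow> real" where
  "hfact a = fact (nat (a div 2))"

definition hinvfact :: "int \<Rightarrow> real" where
  "hinvfact a = (if a < 0 then 0 else 1 / fact (nat (a div 2)))"

text \<open>Clebsch--Gordan coefficient <j1 m1; j2 m2 | J M> (Racah formula, Condon--Shortley
  convention); all arguments are twice the physical quantum numbers.\<close>
definition clebsch_gordan :: "int \<Rightarrow> int \<Rightarrow> int \<Rightarrow> int \<Rightarrow> int \<Rightarrow> int \<Rightarrow> real" where
  "clebsch_gordan j1 m1 j2 m2 J M =
    (if M = m1 + m2 \<and> \<bar>m1\<bar> \<le> j1 \<and> \<bar>m2\<bar> \<le> j2 \<and> \<bar>M\<bar> \<le> J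
        \<and> \<bar>j1 - j2\<bar> \<le> J \<and> J \<le> j1 + j2
        \<and> even (j1 + m1) \<and> even (j2 + m2) \<and> even (J + M) \<and> even (j1 + j2 + J)
     then sqrt ((J + 1) * hfact (J + j1 - j2) * hfact (J - j1 + j2) * hfact (j1 + j2 - J)
                / hfact (j1 + j2 + J + 2))
        * sqrt (hfact (J + M) * hfact (J - M) * hfact (j1 - m1) * hfact (j1 + m1)
                * hfact (j2 - m2) * hfact (j2 + m2))
        * (\<Sum>k\<in>{0..(j1 + j2 - J) div 2}. (-1) ^ nat k
             * hinvfact (2 * k) * hinvfact (j1 + j2 - J - 2 * k) * hinvfact (j1 - m1 - 2 * k)
             * hinvfact (j2 + m2 - 2 * k) * hinvfact (J - j2 + m1 + 2 * k)
             * hinvfact (J - j1 - m2 + 2 * k))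
     else 0)"

text \<open>Spin-J representation on C^d, d = 2J+1. Basis index i < d corresponds to |J,m>
  with m = i - J, i.e. doubled: 2m = 2i - (d - 1).  Doubled spin 2J = d - 1.\<close>
definition two_m :: "nat \<Rightarrow> nat \<Rightarrow> int" where
  "two_m d i = 2 * int i - (int d - 1)"

definition spin_of :: "nat \<Rightarrow> real" where
  "spin_of d = (real d - 1) / 2"

definition J_plus :: "nat \<Rightarrow> complex mat" where
  "J_plus d = mat d d (\<lambda>(r, c). if r = c + 1 then
      complex_of_real (sqrt (spin_of d * (spin_of d + 1)
         - (real_of_int (two_m d c) / 2) * (real_of_int (two_m d c) / 2 + 1)))
      else 0)"

definition J_minus :: "nat \<Rightarrow> complex mat" where
  "J_minus d = mat d d (\<lambda>(r, c). if r + 1 = c then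
      complex_of_real (sqrt (spin_of d * (spin_of d + 1)
         - (real_of_int (two_m d c) / 2) * (real_of_int (two_m d c) / 2 - 1)))
      else 0)"

definition J_x :: "nat \<Rightarrow> complex mat" where
  "J_x d = (1 / 2 :: complex) \<cdot>\<^sub>m (J_plus d + J_minus d)"

definition J_y :: "nat \<Rightarrow> complex mat" where
  "J_y d = (1 / (2 * \<i>) :: complex) \<cdot>\<^sub>m (J_plus d - J_minus d)"

text \<open>Irreducible spherical tensor operator T^(k)_q(J) on the spin-J space (d = 2J+1):
  T^(k)_q = sqrt((2k+1)/(2J+1)) \<Sum>_m <J,m+q | k,q; J,m> |J,m+q><J,m|.\<close>
definition T_tensor :: "nat \<Rightarrow> nat \<Rightarrow> int \<Rightarrow> complex mat" where
  "T_tensor d k q = mat d d (\<lambda>(r, c). if int r = int c + q then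
      complex_of_real (sqrt ((2 * real k + 1) / real d)
        * clebsch_gordan (2 * int k) (2 * q) (int d - 1) (two_m d c) (int d - 1) (two_m d r))
      else 0)"

text \<open>Lie algebra generated by Hermitian H_1..H_n: the smallest real subspace of d\<times>d matrices
  containing -i H_j and closed under commutators.\<close>
inductive_set lie_generated :: "nat \<Rightarrow> complex mat set \<Rightarrow> complex mat set"
  for d :: nat and Hs :: "complex mat set" where
  gen: "H \<in> Hs \<Longrightarrow> (- \<i>) \<cdot>\<^sub>m H \<in> lie_generated d Hs"
| zero: "0\<^sub>m d d \<in> lie_generated d Hs"
| add: "A \<in> lie_generated d Hs \<Longrightarrow> B \<in> lie_generated d Hs \<Longrightarrow> A + B \<in> lie_generated d Hs"
| smult: "A \<in> lie_generated d Hs \<Longrightarrow> complex_of_real r \<cdot>\<^sub>m A \<in> lie_generated d Hs"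
| comm: "A \<in> lie_generated d Hs \<Longrightarrow> B \<in> lie_generated d Hs \<Longrightarrow> A * B - B * A \<in> lie_generated d Hs"

definition mat_trace :: "complex mat \<Rightarrow> complex" where
  "mat_trace A = (\<Sum>i<dim_row A. A $$ (i, i))"

definition su :: "nat \<Rightarrow> complex mat set" where
  "su d = {A \<in> carrier_mat d d. (\<forall>i<d. \<forall>j<d. A $$ (i, j) = - cnj (A $$ (j, i))) \<and> mat_trace A = 0}"

end

theory Submission
  imports Defs
begin

text \<open>
  The generators -iJ_x, -iJ_y, -iT^(2)_0 are traceless and anti-Hermitian, which gives one inclusion.
  Conversely, T^(2)_0 is diagonal with entries proportional to 3m^2 - J(J+1); adding a multiple of
  J_z = -i[J_x, J_y] gives an element H = -i diag(h) of the algebra whose gaps h_c - h_{c+1} between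
  neighbouring levels have pairwise distinct squares. Since ad_H^2 multiplies the (r, c) entry by
  -(h_r - h_c)^2, polynomials in ad_H^2 cut the pair of entries (c, c+1), (c+1, c) out of -iJ_x, which
  yields i(E_{c,c+1} + E_{c+1,c}); one more application of ad_H yields E_{c,c+1} - E_{c+1,c}.
  Commutators of these adjacent elements produce the standard basis of su(d).
\<close>

section \<open>Matrix facts and the Lie algebra su(d)\<close>

lemma index_mult_mat_sum:
  assumes "A \<in> carrier_mat d d" "B \<in> carrier_mat d d" "r < d" "c < d"
  shows "(A * B) $$ (r, c) = (\<Sum>k<d. A $$ (r, k) * B $$ (k, c))"
  using assms by (auto simp: scalar_prod_def lessThan_atLeast0 intro!: sum.cong)

lemma diagonal_sum_commutator_eq_0:
  fixes A B :: "'a::comm_ring mat"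
  assumes A: "A \<in> carrier_mat d d" and B: "B \<in> carrier_mat d d"
  shows "(\<Sum>i<d. (A * B - B * A) $$ (i, i)) = 0"
proof -
  have "(\<Sum>i<d. (A * B - B * A) $$ (i, i))
      = (\<Sum>i<d. \<Sum>k<d. A $$ (i, k) * B $$ (k, i)) - (\<Sum>i<d. \<Sum>k<d. B $$ (i, k) * A $$ (k, i))"
    using A B by (simp add: index_mult_mat_sum[symmetric] sum_subtractf)
  also have "(\<Sum>i<d. \<Sum>k<d. B $$ (i, k) * A $$ (k, i)) = (\<Sum>k<d. \<Sum>i<d. B $$ (i, k) * A $$ (k, i))"
    by (rule sum.swap)
  finally show ?thesis by (simp add: mult.commute)
qed

lemma commutator_diagonal_entry:
  fixes H M :: "'a::comm_ring mat"
  assumes H: "H \<in> carrier_mat d d" and M: "M \<in> carrier_mat d d"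
    and H_diag: "\<And>r c. r < d \<Longrightarrow> c < d \<Longrightarrow> H $$ (r, c) = (if r = c then h r else 0)"
    and rc: "r < d" "c < d"
  shows "(H * M - M * H) $$ (r, c) = (h r - h c) * M $$ (r, c)"
proof -
  have "(H * M) $$ (r, c) = (\<Sum>k<d. if k = r then h r * M $$ (r, c) else 0)"
    unfolding index_mult_mat_sum[OF H M rc] by (rule sum.cong) (use H_diag rc in auto)
  moreover have "(M * H) $$ (r, c) = (\<Sum>k<d. if k = c then M $$ (r, c) * h c else 0)"
    unfolding index_mult_mat_sum[OF M H rc] by (rule sum.cong) (use H_diag rc in auto)
  ultimately show ?thesis
    using H M rc by (simp add: algebra_simps)
qed

lemma mat_trace_carrier: "A \<in> carrier_mat d d \<Longrightarrow> mat_trace A = (\<Sum>i<d. A $$ (i, i))"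
  by (simp add: mat_trace_def)

text \<open>Skew-symmetry is stated with the conjugate on the left: in the orientation of \<open>su_def\<close> it loops
  when used as a rewrite rule.\<close>
lemma su_iff:
  "A \<in> su d \<longleftrightarrow> A \<in> carrier_mat d d \<and> (\<forall>i<d. \<forall>j<d. cnj (A $$ (i, j)) = - A $$ (j, i))
      \<and> (\<Sum>i<d. A $$ (i, i)) = 0"
proof -
  have "(\<forall>i<d. \<forall>j<d. A $$ (i, j) = - cnj (A $$ (j, i))) \<longleftrightarrow> (\<forall>i<d. \<forall>j<d. cnj (A $$ (i, j)) = - A $$ (j, i))"
    by (metis complex_cnj_cnj complex_cnj_minus minus_minus)
  then show ?thesis
    unfolding su_def by (auto simp: mat_trace_carrier)
qed

lemma su_zero: "0\<^sub>m d d \<in> su d"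
  by (simp add: su_iff)

lemma su_add: "A \<in> su d \<Longrightarrow> B \<in> su d \<Longrightarrow> A + B \<in> su d"
  by (auto simp: su_iff sum.distrib)

lemma su_smult_real: "A \<in> su d \<Longrightarrow> complex_of_real r \<cdot>\<^sub>m A \<in> su d"
  by (auto simp: su_iff sum_distrib_left[symmetric])

lemma su_skew: "A \<in> su d \<Longrightarrow> i < d \<Longrightarrow> j < d \<Longrightarrow> cnj (A $$ (i, j)) = - A $$ (j, i)"
  by (simp add: su_iff)

lemma su_cnj_index_mult:
  assumes A: "A \<in> su d" and B: "B \<in> su d" and ij: "i < d" "j < d"
  shows "cnj ((A * B) $$ (j, i)) = (B * A) $$ (i, j)"
proof -
  have carrier: "A \<in> carrier_mat d d" "B \<in> carrier_mat d d"
    using A B by (simp_all add: su_iff)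
  have "cnj ((A * B) $$ (j, i)) = (\<Sum>k<d. cnj (A $$ (j, k)) * cnj (B $$ (k, i)))"
    unfolding index_mult_mat_sum[OF carrier ij(2,1)] by simp
  also have "\<dots> = (\<Sum>k<d. B $$ (i, k) * A $$ (k, j))"
    using su_skew[OF A] su_skew[OF B] ij by (intro sum.cong) auto
  also have "\<dots> = (B * A) $$ (i, j)"
    unfolding index_mult_mat_sum[OF carrier(2,1) ij] ..
  finally show ?thesis .
qed

lemma su_commutator:
  assumes A: "A \<in> su d" and B: "B \<in> su d"
  shows "A * B - B * A \<in> su d"
  unfolding su_iff
proof (intro conjI allI impI)
  have carrier: "A \<in> carrier_mat d d" "B \<in> carrier_mat d d"
    using A B by (simp_all add: su_iff)
  then show "A * B - B * A \<in> carrier_mat d d"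
    by (intro minus_carrier_mat mult_carrier_mat)
  show "cnj ((A * B - B * A) $$ (i, j)) = - (A * B - B * A) $$ (j, i)" if "i < d" "j < d" for i j
    using that carrier su_cnj_index_mult[OF A B that(2,1)] su_cnj_index_mult[OF B A that(2,1)] by simp
  show "(\<Sum>i<d. (A * B - B * A) $$ (i, i)) = 0"
    by (rule diagonal_sum_commutator_eq_0[OF carrier])
qed

lemma minus_i_hermitian_in_su:
  assumes "H \<in> carrier_mat d d" "\<And>r c. r < d \<Longrightarrow> c < d \<Longrightarrow> cnj (H $$ (r, c)) = H $$ (c, r)"
    and "(\<Sum>i<d. H $$ (i, i)) = 0"
  shows "(- \<i>) \<cdot>\<^sub>m H \<in> su d"
  using assms by (auto simp: su_iff sum_negf sum_distrib_left[symmetric])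

lemma lie_generated_subset_su:
  assumes "\<And>H. H \<in> Hs \<Longrightarrow> (- \<i>) \<cdot>\<^sub>m H \<in> su d"
  shows "lie_generated d Hs \<subseteq> su d"
proof
  show "A \<in> su d" if "A \<in> lie_generated d Hs" for A
    using that by induction (blast intro: assms su_zero su_add su_smult_real su_commutator)+
qed

section \<open>Closure properties of generated Lie algebras\<close>

lemma lie_generated_carrier:
  assumes "Hs \<subseteq> carrier_mat d d" "A \<in> lie_generated d Hs"
  shows "A \<in> carrier_mat d d"
  using assms(2) by induction (use assms(1) in \<open>auto intro!: minus_carrier_mat mult_carrier_mat\<close>)

lemma lie_generated_sum:
  assumes "Hs \<subseteq> carrier_mat d d" "finite S" "\<And>x. x \<in> S \<Longrightarrow> F x \<in> lie_generated d Hs"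
  shows "\<exists>M\<in>lie_generated d Hs. \<forall>r<d. \<forall>c<d. M $$ (r, c) = (\<Sum>x\<in>S. F x $$ (r, c))"
  using assms(2,3)
proof (induction S rule: finite_induct)
  case empty
  show ?case by (intro bexI[of _ "0\<^sub>m d d"]) (auto intro: lie_generated.zero)
next
  case (insert x S)
  then obtain M where M: "M \<in> lie_generated d Hs" "\<forall>r<d. \<forall>c<d. M $$ (r, c) = (\<Sum>x\<in>S. F x $$ (r, c))"
    by blast
  have "M \<in> carrier_mat d d"
    using lie_generated_carrier[OF assms(1) M(1)] .
  then have "\<forall>r<d. \<forall>c<d. (F x + M) $$ (r, c) = (\<Sum>x\<in>insert x S. F x $$ (r, c))"
    using M(2) insert.hyps by simp
  moreover have "F x + M \<in> lie_generated d Hs"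
    by (intro lie_generated.add insert.prems M(1)) simp
  ultimately show ?case by blast
qed

lemma lie_generated_eqI:
  assumes "Hs \<subseteq> carrier_mat d d" "A \<in> lie_generated d Hs" "B \<in> carrier_mat d d"
    and "\<And>r c. r < d \<Longrightarrow> c < d \<Longrightarrow> B $$ (r, c) = A $$ (r, c)"
  shows "B \<in> lie_generated d Hs"
proof -
  have "B = A"
    using assms lie_generated_carrier[OF assms(1,2)] by (intro eq_matI) auto
  then show ?thesis
    using assms(2) by simp
qed

lemma lie_generated_smult_cancel:
  assumes Hs: "Hs \<subseteq> carrier_mat d d" and x: "x \<noteq> 0"
    and scaled: "complex_of_real x \<cdot>\<^sub>m A \<in> lie_generated d Hs" and A: "A \<in> carrier_mat d d"
  shows "A \<in> lie_generated d Hs"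
proof -
  have "complex_of_real (1 / x) * (complex_of_real x * z) = z" for z
  proof -
    have "complex_of_real (1 / x) * complex_of_real x = complex_of_real (1 / x * x)"
      by (rule of_real_mult[symmetric])
    also have "\<dots> = 1"
      using x by simp
    finally show ?thesis
      unfolding mult.assoc[symmetric] by simp
  qed
  then have unscale: "complex_of_real (1 / x) \<cdot>\<^sub>m (complex_of_real x \<cdot>\<^sub>m A) = A"
    by (intro eq_matI) (simp_all only: index_smult_mat)
  show ?thesis
    using lie_generated.smult[OF scaled, of "1 / x"] unfolding unscale .
qed

lemma lie_generated_ad_sq_diagonal:
  fixes \<eta> :: "nat \<Rightarrow> real"
  assumes Hs: "Hs \<subseteq> carrier_mat d d" and H: "H \<in> lie_generated d Hs"
    and H_diag: "\<And>r c. r < d \<Longrightarrow> c < d \<Longrightarrow> H $$ (r, c) = (if r = c then - \<i> * complex_of_real (\<eta> r) else 0)"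
    and A: "A \<in> lie_generated d Hs"
  shows "mat d d (\<lambda>(r, c). complex_of_real (- (\<eta> r - \<eta> c)\<^sup>2) * A $$ (r, c)) \<in> lie_generated d Hs"
proof -
  define B where "B = H * A - A * H"
  have B: "B \<in> lie_generated d Hs"
    unfolding B_def by (intro lie_generated.comm H A)
  have H_carrier: "H \<in> carrier_mat d d" and A_carrier: "A \<in> carrier_mat d d" and B_carrier: "B \<in> carrier_mat d d"
    using lie_generated_carrier[OF Hs] H A B by blast+
  have step: "(H * X - X * H) $$ (r, c) = (- \<i> * complex_of_real (\<eta> r - \<eta> c)) * X $$ (r, c)"
    if "X \<in> carrier_mat d d" "r < d" "c < d" for X r c
    using commutator_diagonal_entry[OF H_carrier that(1) H_diag that(2,3)] by (simp add: algebra_simps)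
  have "(H * B - B * H) $$ (r, c) = complex_of_real (- (\<eta> r - \<eta> c)\<^sup>2) * A $$ (r, c)"
    if "r < d" "c < d" for r c
  proof -
    have "B $$ (r, c) = (- \<i> * complex_of_real (\<eta> r - \<eta> c)) * A $$ (r, c)"
      unfolding B_def by (rule step[OF A_carrier that])
    then have "(H * B - B * H) $$ (r, c)
        = (- \<i> * complex_of_real (\<eta> r - \<eta> c)) * ((- \<i> * complex_of_real (\<eta> r - \<eta> c)) * A $$ (r, c))"
      using step[OF B_carrier that] by (simp only:)
    also have "\<dots> = complex_of_real (- (\<eta> r - \<eta> c)\<^sup>2) * A $$ (r, c)"
      by (simp add: power2_eq_square algebra_simps)
    finally show ?thesis .
  qed
  then show ?thesis
    by (intro lie_generated_eqI[OF Hs lie_generated.comm[OF H B]]) auto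
qed

text \<open>A polynomial in the entrywise scaling by \<open>w\<close> projects onto the entries of a single weight \<open>\<mu>\<close>:
  multiplying by \<open>w - b\<close> removes the weight \<open>b \<noteq> \<mu>\<close>, and we induct on the set of weights that remain.\<close>
lemma lie_generated_weight_component:
  fixes w :: "nat \<times> nat \<Rightarrow> real"
  assumes Hs: "Hs \<subseteq> carrier_mat d d"
    and scale: "\<And>A. A \<in> lie_generated d Hs \<Longrightarrow> mat d d (\<lambda>(r, c). complex_of_real (w (r, c)) * A $$ (r, c)) \<in> lie_generated d Hs"
    and "finite V" "M \<in> lie_generated d Hs" "\<forall>r<d. \<forall>c<d. M $$ (r, c) \<noteq> 0 \<longrightarrow> w (r, c) \<in> V" "\<mu> \<in> V"
  shows "mat d d (\<lambda>(r, c). if w (r, c) = \<mu> then M $$ (r, c) else 0) \<in> lie_generated d Hs"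
  using assms(3-)
proof (induction V arbitrary: M rule: finite_psubset_induct)
  case (psubset V)
  show ?case
  proof (cases "V = {\<mu>}")
    case True
    then show ?thesis
      using psubset.prems by (intro lie_generated_eqI[OF Hs psubset.prems(1)]) auto
  next
    case False
    then obtain b where b: "b \<in> V" "b \<noteq> \<mu>"
      using psubset.prems(3) by blast
    define M' where "M' = mat d d (\<lambda>(r, c). complex_of_real (w (r, c)) * M $$ (r, c)) + complex_of_real (- b) \<cdot>\<^sub>m M"
    have M': "M' \<in> lie_generated d Hs"
      unfolding M'_def by (intro lie_generated.add lie_generated.smult scale psubset.prems(1))
    have M_carrier: "M \<in> carrier_mat d d"
      using lie_generated_carrier[OF Hs psubset.prems(1)] .
    then have M'_index: "M' $$ (r, c) = complex_of_real (w (r, c) - b) * M $$ (r, c)" if "r < d" "c < d" for r c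
      using that by (simp add: M'_def algebra_simps)
    have "\<forall>r<d. \<forall>c<d. M' $$ (r, c) \<noteq> 0 \<longrightarrow> w (r, c) \<in> V - {b}"
      using psubset.prems(2) M'_index by auto
    then have component: "mat d d (\<lambda>(r, c). if w (r, c) = \<mu> then M' $$ (r, c) else 0) \<in> lie_generated d Hs"
      using b psubset.prems(3) by (intro psubset.IH[of "V - {b}" M'] M') auto
    have rescaled: "mat d d (\<lambda>(r, c). if w (r, c) = \<mu> then M' $$ (r, c) else 0)
        = complex_of_real (\<mu> - b) \<cdot>\<^sub>m mat d d (\<lambda>(r, c). if w (r, c) = \<mu> then M $$ (r, c) else 0)"
      by (rule eq_matI) (auto simp: M'_index)
    show ?thesis
      by (rule lie_generated_smult_cancel[OF Hs _ component[unfolded rescaled]]) (use b(2) in simp_all)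
  qed
qed

section \<open>A basis of su(d) and its generation from adjacent elements\<close>

definition skew_unit :: "nat \<Rightarrow> nat \<Rightarrow> nat \<Rightarrow> complex mat" where
  "skew_unit d i j = mat d d (\<lambda>(r, s). if r = i \<and> s = j then 1 else if r = j \<and> s = i then -1 else 0)"

definition sym_unit :: "nat \<Rightarrow> nat \<Rightarrow> nat \<Rightarrow> complex mat" where
  "sym_unit d i j = mat d d (\<lambda>(r, s). if (r = i \<and> s = j) \<or> (r = j \<and> s = i) then \<i> else 0)"

definition diag_unit :: "nat \<Rightarrow> nat \<Rightarrow> nat \<Rightarrow> complex mat" where
  "diag_unit d i j = mat d d (\<lambda>(r, s). if r = s \<and> r = i then \<i> else if r = s \<and> r = j then - \<i> else 0)"

lemma unit_carrier [simp]:
  "skew_unit d i j \<in> carrier_mat d d" "sym_unit d i j \<in> carrier_mat d d" "diag_unit d i j \<in> carrier_mat d d"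
  by (simp_all add: skew_unit_def sym_unit_def diag_unit_def)

lemma unit_dim [simp]:
  "dim_row (skew_unit d i j) = d" "dim_col (skew_unit d i j) = d"
  "dim_row (sym_unit d i j) = d" "dim_col (sym_unit d i j) = d"
  "dim_row (diag_unit d i j) = d" "dim_col (diag_unit d i j) = d"
  by (simp_all add: skew_unit_def sym_unit_def diag_unit_def)

lemma skew_unit_index:
  "r < d \<Longrightarrow> s < d \<Longrightarrow> skew_unit d i j $$ (r, s) = (if r = i \<and> s = j then 1 else if r = j \<and> s = i then -1 else 0)"
  by (simp add: skew_unit_def)

lemma sym_unit_index:
  "r < d \<Longrightarrow> s < d \<Longrightarrow> sym_unit d i j $$ (r, s) = (if (r = i \<and> s = j) \<or> (r = j \<and> s = i) then \<i> else 0)"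
  by (simp add: sym_unit_def)

lemma diag_unit_index:
  "r < d \<Longrightarrow> s < d \<Longrightarrow> diag_unit d i j $$ (r, s) = (if r = s \<and> r = i then \<i> else if r = s \<and> r = j then - \<i> else 0)"
  by (simp add: diag_unit_def)

lemma index_mult_mat_two_support:
  fixes A B :: "'a::comm_ring mat"
  assumes "A \<in> carrier_mat d d" "B \<in> carrier_mat d d" "i \<noteq> j" "i < d" "j < d" "r < d" "s < d"
    and "\<And>k. k < d \<Longrightarrow> k \<noteq> i \<Longrightarrow> k \<noteq> j \<Longrightarrow> A $$ (r, k) = 0"
  shows "(A * B) $$ (r, s) = A $$ (r, i) * B $$ (i, s) + A $$ (r, j) * B $$ (j, s)"
proof -
  have "(A * B) $$ (r, s) = (\<Sum>k<d. A $$ (r, k) * B $$ (k, s))"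
    using assms(1,2,6,7) by (rule index_mult_mat_sum)
  also have "\<dots> = (\<Sum>k\<in>{i, j}. A $$ (r, k) * B $$ (k, s))"
    by (rule sum.mono_neutral_right) (use assms in auto)
  finally show ?thesis
    using assms(3) by simp
qed

lemma commutator_skew_skew:
  assumes "i < d" "j < d" "k < d" "i \<noteq> j" "j \<noteq> k" "i \<noteq> k"
  shows "skew_unit d i j * skew_unit d j k - skew_unit d j k * skew_unit d i j = skew_unit d i k"
proof (rule eq_matI)
  fix r s assume "r < dim_row (skew_unit d i k)" "s < dim_col (skew_unit d i k)"
  then have rs: "r < d" "s < d" by simp_all
  have "(skew_unit d i j * skew_unit d j k) $$ (r, s)
      = skew_unit d i j $$ (r, i) * skew_unit d j k $$ (i, s) + skew_unit d i j $$ (r, j) * skew_unit d j k $$ (j, s)"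
    by (rule index_mult_mat_two_support) (use assms rs in \<open>auto simp: skew_unit_index\<close>)
  moreover have "(skew_unit d j k * skew_unit d i j) $$ (r, s)
      = skew_unit d j k $$ (r, j) * skew_unit d i j $$ (j, s) + skew_unit d j k $$ (r, k) * skew_unit d i j $$ (k, s)"
    by (rule index_mult_mat_two_support) (use assms rs in \<open>auto simp: skew_unit_index\<close>)
  ultimately show "(skew_unit d i j * skew_unit d j k - skew_unit d j k * skew_unit d i j) $$ (r, s)
      = skew_unit d i k $$ (r, s)"
    using rs assms by (simp add: skew_unit_index)
qed simp_all

lemma commutator_sym_skew:
  assumes "i < d" "j < d" "k < d" "i \<noteq> j" "j \<noteq> k" "i \<noteq> k"
  shows "sym_unit d i j * skew_unit d j k - skew_unit d j k * sym_unit d i j = sym_unit d i k"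
proof (rule eq_matI)
  fix r s assume "r < dim_row (sym_unit d i k)" "s < dim_col (sym_unit d i k)"
  then have rs: "r < d" "s < d" by simp_all
  have "(sym_unit d i j * skew_unit d j k) $$ (r, s)
      = sym_unit d i j $$ (r, i) * skew_unit d j k $$ (i, s) + sym_unit d i j $$ (r, j) * skew_unit d j k $$ (j, s)"
    by (rule index_mult_mat_two_support) (use assms rs in \<open>auto simp: sym_unit_index\<close>)
  moreover have "(skew_unit d j k * sym_unit d i j) $$ (r, s)
      = skew_unit d j k $$ (r, j) * sym_unit d i j $$ (j, s) + skew_unit d j k $$ (r, k) * sym_unit d i j $$ (k, s)"
    by (rule index_mult_mat_two_support) (use assms rs in \<open>auto simp: skew_unit_index\<close>)
  ultimately show "(sym_unit d i j * skew_unit d j k - skew_unit d j k * sym_unit d i j) $$ (r, s)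
      = sym_unit d i k $$ (r, s)"
    using rs assms by (simp add: skew_unit_index sym_unit_index)
qed simp_all

lemma commutator_skew_sym:
  assumes "i < d" "j < d" "i \<noteq> j"
  shows "skew_unit d i j * sym_unit d i j - sym_unit d i j * skew_unit d i j = 2 \<cdot>\<^sub>m diag_unit d i j"
proof (rule eq_matI)
  fix r s assume "r < dim_row (2 \<cdot>\<^sub>m diag_unit d i j)" "s < dim_col (2 \<cdot>\<^sub>m diag_unit d i j)"
  then have rs: "r < d" "s < d" by simp_all
  have "(skew_unit d i j * sym_unit d i j) $$ (r, s)
      = skew_unit d i j $$ (r, i) * sym_unit d i j $$ (i, s) + skew_unit d i j $$ (r, j) * sym_unit d i j $$ (j, s)"
    by (rule index_mult_mat_two_support) (use assms rs in \<open>auto simp: skew_unit_index\<close>)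
  moreover have "(sym_unit d i j * skew_unit d i j) $$ (r, s)
      = sym_unit d i j $$ (r, i) * skew_unit d i j $$ (i, s) + sym_unit d i j $$ (r, j) * skew_unit d i j $$ (j, s)"
    by (rule index_mult_mat_two_support) (use assms rs in \<open>auto simp: sym_unit_index\<close>)
  ultimately show "(skew_unit d i j * sym_unit d i j - sym_unit d i j * skew_unit d i j) $$ (r, s)
      = (2 \<cdot>\<^sub>m diag_unit d i j) $$ (r, s)"
    using rs assms by (simp add: skew_unit_index sym_unit_index diag_unit_index)
qed simp_all
lemma su_diag_index: "A \<in> su d \<Longrightarrow> r < d \<Longrightarrow> A $$ (r, r) = \<i> * complex_of_real (Im (A $$ (r, r)))"
  using su_skew[of A d r r] by (simp add: complex_eq_iff)

lemma sum_offdiag_units_index: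
  assumes A: "A \<in> su d" and rc: "r < d" "c < d"
  shows "(\<Sum>p\<in>{p. fst p < snd p \<and> snd p < d}.
      (complex_of_real (Re (A $$ p)) \<cdot>\<^sub>m skew_unit d (fst p) (snd p)
        + complex_of_real (Im (A $$ p)) \<cdot>\<^sub>m sym_unit d (fst p) (snd p)) $$ (r, c))
    = (if r = c then 0 else A $$ (r, c))"
    (is "(\<Sum>p\<in>?S. ?F p) = _")
proof -
  have finite: "finite ?S"
    by (rule finite_subset[of _ "{..<d} \<times> {..<d}"]) auto
  have "?F p = (if p = (r, c) then A $$ (r, c) else 0) + (if p = (c, r) then - cnj (A $$ (c, r)) else 0)"
    if p_in: "p \<in> ?S" for p
  proof -
    obtain i j where p: "p = (i, j)" "i < j" "j < d"
      using p_in by (cases p) auto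
    have re_im: "complex_of_real (Re z) + complex_of_real (Im z) * \<i> = z"
      "complex_of_real (Im z) * \<i> - complex_of_real (Re z) = - cnj z" for z
      by (simp_all add: complex_eq_iff)
    show ?thesis
      using rc p by (auto simp: skew_unit_index sym_unit_index re_im)
  qed
  then have "(\<Sum>p\<in>?S. ?F p)
      = (\<Sum>p\<in>?S. if p = (r, c) then A $$ (r, c) else 0) + (\<Sum>p\<in>?S. if p = (c, r) then - cnj (A $$ (c, r)) else 0)"
    by (simp add: sum.distrib)
  also have "\<dots> = (if r < c then A $$ (r, c) else 0) + (if c < r then - cnj (A $$ (c, r)) else 0)"
    using finite rc by simp
  also have "\<dots> = (if r = c then 0 else A $$ (r, c))"
    using su_skew[OF A rc(2,1)] by auto
  finally show ?thesis .
qed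

lemma sum_diag_units_index:
  assumes A: "A \<in> su d" and d: "d = Suc n" and rc: "r < d" "c < d"
  shows "(\<Sum>i<n. (complex_of_real (Im (A $$ (i, i))) \<cdot>\<^sub>m diag_unit d i n) $$ (r, c))
    = (if r = c then A $$ (r, c) else 0)"
proof -
  have "(\<Sum>i<n. (complex_of_real (Im (A $$ (i, i))) \<cdot>\<^sub>m diag_unit d i n) $$ (r, c))
      = (\<Sum>i<n. if i = r \<and> r = c then \<i> * complex_of_real (Im (A $$ (r, r))) else 0)
        + (\<Sum>i<n. if r = c \<and> r = n then - \<i> * complex_of_real (Im (A $$ (i, i))) else 0)"
    using rc d by (auto simp: diag_unit_index sum.distrib[symmetric] intro!: sum.cong)
  also have "\<dots> = (if r = c then A $$ (r, c) else 0)"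
  proof (cases "r = c \<and> r = n")
    case True
    have "(\<Sum>i<d. Im (A $$ (i, i))) = 0"
      using A by (simp add: su_iff flip: Im_sum)
    then have "(\<Sum>i<n. Im (A $$ (i, i))) = - Im (A $$ (n, n))"
      using d by simp
    have "(\<Sum>i<n. if r = c \<and> r = n then - \<i> * complex_of_real (Im (A $$ (i, i))) else 0)
        = - \<i> * complex_of_real (\<Sum>i<n. Im (A $$ (i, i)))"
      using True by (simp add: sum_distrib_left)
    also have "\<dots> = A $$ (n, n)"
      using \<open>(\<Sum>i<n. Im (A $$ (i, i))) = - Im (A $$ (n, n))\<close> su_diag_index[OF A, of n] d by simp
    finally show ?thesis
      using True d by auto
  qed (use rc d su_diag_index[OF A] in auto)
  finally show ?thesis .
qed

context
  fixes d :: nat and Hs :: "complex mat set"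
  assumes Hs: "Hs \<subseteq> carrier_mat d d"
    and adjacent: "\<And>c. c + 1 < d \<Longrightarrow> skew_unit d c (c + 1) \<in> lie_generated d Hs \<and> sym_unit d c (c + 1) \<in> lie_generated d Hs"
begin

lemma lie_generated_skew_sym_unit:
  "i < j \<Longrightarrow> j < d \<Longrightarrow> skew_unit d i j \<in> lie_generated d Hs \<and> sym_unit d i j \<in> lie_generated d Hs"
proof (induction j)
  case (Suc j)
  show ?case
  proof (cases "i = j")
    case False
    then have ij: "i < j" "Suc j < d"
      using Suc.prems by simp_all
    then have "skew_unit d i j \<in> lie_generated d Hs" "sym_unit d i j \<in> lie_generated d Hs"
      and "skew_unit d j (j + 1) \<in> lie_generated d Hs"
      using Suc.IH adjacent[of j] by simp_all
    then have "skew_unit d i j * skew_unit d j (j + 1) - skew_unit d j (j + 1) * skew_unit d i j \<in> lie_generated d Hs"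
      and "sym_unit d i j * skew_unit d j (j + 1) - skew_unit d j (j + 1) * sym_unit d i j \<in> lie_generated d Hs"
      by (auto intro: lie_generated.comm)
    then show ?thesis
      using ij by (simp add: commutator_skew_skew commutator_sym_skew)
  qed (use Suc.prems adjacent in simp)
qed simp

lemma lie_generated_diag_unit:
  assumes "i < j" "j < d"
  shows "diag_unit d i j \<in> lie_generated d Hs"
proof -
  have "skew_unit d i j * sym_unit d i j - sym_unit d i j * skew_unit d i j \<in> lie_generated d Hs"
    using lie_generated_skew_sym_unit[OF assms] by (intro lie_generated.comm) auto
  then have "complex_of_real (1 / 2) \<cdot>\<^sub>m (2 \<cdot>\<^sub>m diag_unit d i j) \<in> lie_generated d Hs"
    using assms by (intro lie_generated.smult) (simp add: commutator_skew_sym)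
  then show ?thesis
    by (rule lie_generated_eqI[OF Hs]) simp_all
qed

lemma su_subset_lie_generated: "su d \<subseteq> lie_generated d Hs"
proof
  fix A
  assume A: "A \<in> su d"
  show "A \<in> lie_generated d Hs"
  proof (cases d)
    case 0
    then show ?thesis
      using A by (intro lie_generated_eqI[OF Hs lie_generated.zero]) (auto simp: su_iff)
  next
    case (Suc n)
    define S where "S = {p. fst p < snd p \<and> snd p < d}"
    define F where "F p = complex_of_real (Re (A $$ p)) \<cdot>\<^sub>m skew_unit d (fst p) (snd p)
      + complex_of_real (Im (A $$ p)) \<cdot>\<^sub>m sym_unit d (fst p) (snd p)" for p
    define G where "G i = complex_of_real (Im (A $$ (i, i))) \<cdot>\<^sub>m diag_unit d i n" for i
    have "finite S"
      unfolding S_def by (rule finite_subset[of _ "{..<d} \<times> {..<d}"]) auto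
    moreover have "F p \<in> lie_generated d Hs" if "p \<in> S" for p
      using that lie_generated_skew_sym_unit unfolding S_def F_def
      by (auto intro!: lie_generated.add lie_generated.smult)
    ultimately obtain M1 where M1: "M1 \<in> lie_generated d Hs" "\<forall>r<d. \<forall>c<d. M1 $$ (r, c) = (\<Sum>p\<in>S. F p $$ (r, c))"
      using lie_generated_sum[OF Hs] by blast
    have "G i \<in> lie_generated d Hs" if "i \<in> {..<n}" for i
      using that lie_generated_diag_unit Suc unfolding G_def by (auto intro: lie_generated.smult)
    then obtain M2 where M2: "M2 \<in> lie_generated d Hs" "\<forall>r<d. \<forall>c<d. M2 $$ (r, c) = (\<Sum>i<n. G i $$ (r, c))"
      using lie_generated_sum[OF Hs, of "{..<n}" G] by blast
    have carrier: "A \<in> carrier_mat d d" "M1 \<in> carrier_mat d d" "M2 \<in> carrier_mat d d"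
      using A M1(1) M2(1) lie_generated_carrier[OF Hs] by (auto simp: su_iff)
    have "A = M1 + M2"
    proof (rule eq_matI)
      fix r c
      assume "r < dim_row (M1 + M2)" "c < dim_col (M1 + M2)"
      then have rc: "r < d" "c < d"
        using carrier by simp_all
      show "A $$ (r, c) = (M1 + M2) $$ (r, c)"
        using rc carrier M1(2) M2(2) sum_offdiag_units_index[OF A rc] sum_diag_units_index[OF A Suc rc]
        unfolding S_def F_def G_def by simp
    qed (use carrier in simp_all)
    then show ?thesis
      using M1(1) M2(1) by (simp add: lie_generated.add)
  qed
qed

end

section \<open>The rotation generators\<close>

definition zproj :: "nat \<Rightarrow> nat \<Rightarrow> real" where
  "zproj d c = real c - spin_of d"

definition ladder :: "nat \<Rightarrow> nat \<Rightarrow> real" where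
  "ladder d c = sqrt ((real d - 1 - real c) * (real c + 1))"

lemma ladder_sq: "c < d \<Longrightarrow> ladder d c * ladder d c = (real d - 1 - real c) * (real c + 1)"
  by (simp add: ladder_def)

lemma ladder_pos: "c + 1 < d \<Longrightarrow> 0 < ladder d c"
  by (simp add: ladder_def)

lemma J_plus_index:
  assumes "r < d" "c < d"
  shows "J_plus d $$ (r, c) = (if r = c + 1 then complex_of_real (ladder d c) else 0)"
proof -
  have "spin_of d * (spin_of d + 1) - real_of_int (two_m d c) / 2 * (real_of_int (two_m d c) / 2 + 1)
      = (real d - 1 - real c) * (real c + 1)"
    by (simp add: two_m_def spin_of_def field_simps)
  then show ?thesis
    using assms by (simp add: J_plus_def ladder_def)
qed

lemma J_minus_index:
  assumes "r < d" "c < d"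
  shows "J_minus d $$ (r, c) = (if c = r + 1 then complex_of_real (ladder d r) else 0)"
proof -
  have "spin_of d * (spin_of d + 1) - real_of_int (two_m d (r + 1)) / 2 * (real_of_int (two_m d (r + 1)) / 2 - 1)
      = (real d - 1 - real r) * (real r + 1)"
    by (simp add: two_m_def spin_of_def field_simps)
  then show ?thesis
    using assms by (auto simp: J_minus_def ladder_def)
qed

lemma J_x_carrier: "J_x d \<in> carrier_mat d d"
  by (simp add: J_x_def J_plus_def J_minus_def)

lemma J_y_carrier: "J_y d \<in> carrier_mat d d"
  unfolding carrier_mat_def J_y_def by (simp add: J_plus_def J_minus_def)

lemma J_x_index:
  assumes "r < d" "c < d"
  shows "J_x d $$ (r, c) = (if r = c + 1 then complex_of_real (ladder d c) / 2
    else if c = r + 1 then complex_of_real (ladder d r) / 2 else 0)"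
proof -
  have "J_x d $$ (r, c) = (J_plus d $$ (r, c) + J_minus d $$ (r, c)) / 2"
    using assms by (simp add: J_x_def J_plus_def J_minus_def)
  then show ?thesis
    using assms by (auto simp: J_plus_index J_minus_index)
qed

lemma J_y_index:
  assumes "r < d" "c < d"
  shows "J_y d $$ (r, c) = (if r = c + 1 then complex_of_real (ladder d c) / (2 * \<i>)
    else if c = r + 1 then - complex_of_real (ladder d r) / (2 * \<i>) else 0)"
proof -
  have "J_y d $$ (r, c) = (J_plus d $$ (r, c) - J_minus d $$ (r, c)) / (2 * \<i>)"
    using assms by (simp add: J_y_def J_plus_def J_minus_def)
  then show ?thesis
    using assms by (auto simp: J_plus_index J_minus_index diff_divide_distrib)
qed

lemma J_x_hermitian: "r < d \<Longrightarrow> c < d \<Longrightarrow> cnj (J_x d $$ (r, c)) = J_x d $$ (c, r)"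
  by (simp add: J_x_index)

lemma J_y_hermitian: "r < d \<Longrightarrow> c < d \<Longrightarrow> cnj (J_y d $$ (r, c)) = J_y d $$ (c, r)"
  by (simp add: J_y_index)

lemma sum_lessThan_neighbours:
  fixes r :: nat
  assumes "\<And>k. k < d \<Longrightarrow> k \<noteq> r + 1 \<Longrightarrow> k + 1 \<noteq> r \<Longrightarrow> f k = 0"
  shows "(\<Sum>k<d. f k) = (if r + 1 < d then f (r + 1) else 0) + (if 0 < r \<and> r - 1 < d then f (r - 1) else 0)"
proof -
  have "(\<Sum>k<d. f k) = (\<Sum>k<d. (if k = r + 1 then f (r + 1) else 0) + (if k = r - 1 \<and> 0 < r then f (r - 1) else 0))"
    by (rule sum.cong[OF refl]) (use assms in \<open>auto simp del: One_nat_def\<close>)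
  also have "\<dots> = (if r + 1 < d then f (r + 1) else 0) + (if 0 < r \<and> r - 1 < d then f (r - 1) else 0)"
    by (cases "0 < r") (simp_all add: sum.distrib)
  finally show ?thesis .
qed

lemma ladder_sq_complex:
  "c < d \<Longrightarrow> complex_of_real (ladder d c) * complex_of_real (ladder d c) = (of_nat d - 1 - of_nat c) * (of_nat c + 1)"
proof -
  assume "c < d"
  then have "complex_of_real (ladder d c) * complex_of_real (ladder d c)
      = complex_of_real ((real d - 1 - real c) * (real c + 1))"
    by (simp flip: of_real_mult add: ladder_sq)
  then show ?thesis
    by simp
qed

lemma J_x_J_y_cross_above:
  assumes r: "r + 1 < d" and c: "c < d"
  shows "J_x d $$ (r, r + 1) * J_y d $$ (r + 1, c) - J_y d $$ (r, r + 1) * J_x d $$ (r + 1, c)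
    = (if c = r then (of_nat d - 1 - of_nat r) * (of_nat r + 1) / (2 * \<i>) else 0)"
proof -
  have "J_x d $$ (r, r + 1) * J_y d $$ (r + 1, c) - J_y d $$ (r, r + 1) * J_x d $$ (r + 1, c)
      = (if c = r then complex_of_real (ladder d r) * complex_of_real (ladder d r) / (2 * \<i>) else 0)"
    using r c by (auto simp: J_x_index J_y_index field_simps)
  then show ?thesis
    using r ladder_sq_complex[of r d] by simp
qed

lemma J_x_J_y_cross_below:
  assumes q: "q + 1 < d" and c: "c < d"
  shows "J_x d $$ (q + 1, q) * J_y d $$ (q, c) - J_y d $$ (q + 1, q) * J_x d $$ (q, c)
    = (if c = q + 1 then - ((of_nat d - of_nat (q + 1)) * of_nat (q + 1)) / (2 * \<i>) else 0)"
proof -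
  have "J_x d $$ (q + 1, q) * J_y d $$ (q, c) - J_y d $$ (q + 1, q) * J_x d $$ (q, c)
      = (if c = q + 1 then - (complex_of_real (ladder d q) * complex_of_real (ladder d q)) / (2 * \<i>) else 0)"
    using q c by (auto simp: J_x_index J_y_index field_simps)
  moreover have "complex_of_real (ladder d q) * complex_of_real (ladder d q) = (of_nat d - of_nat (q + 1)) * of_nat (q + 1)"
    using q ladder_sq_complex[of q d] by (simp add: algebra_simps)
  ultimately show ?thesis
    by (simp only:)
qed

lemma commutator_J_x_J_y_index:
  assumes r: "r < d" and c: "c < d"
  shows "(J_x d * J_y d - J_y d * J_x d) $$ (r, c) = (if r = c then \<i> * complex_of_real (zproj d r) else 0)"
proof -
  define f where "f k = J_x d $$ (r, k) * J_y d $$ (k, c) - J_y d $$ (r, k) * J_x d $$ (k, c)" for k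
  have up: "(if r + 1 < d then f (r + 1) else 0)
      = (if c = r then (of_nat d - 1 - of_nat r) * (of_nat r + 1) / (2 * \<i>) else 0)"
  proof (cases "r + 1 < d")
    case False
    then have "d = r + 1"
      using r by simp
    then show ?thesis
      using False by simp
  qed (use J_x_J_y_cross_above[of r d c] c in \<open>simp add: f_def\<close>)
  have down: "(if 0 < r \<and> r - 1 < d then f (r - 1) else 0)
      = (if c = r then - ((of_nat d - of_nat r) * of_nat r) / (2 * \<i>) else 0)"
  proof (cases r)
    case (Suc q)
    then show ?thesis
      using J_x_J_y_cross_below[of q d c] r c by (simp add: f_def)
  qed simp
  have "(J_x d * J_y d - J_y d * J_x d) $$ (r, c) = (\<Sum>k<d. f k)"
    using r c J_x_carrier[of d] J_y_carrier[of d]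
    by (simp add: index_mult_mat_sum[symmetric] f_def sum_subtractf)
  also have "\<dots> = (if r + 1 < d then f (r + 1) else 0) + (if 0 < r \<and> r - 1 < d then f (r - 1) else 0)"
    by (rule sum_lessThan_neighbours) (use r in \<open>auto simp: f_def J_x_index J_y_index\<close>)
  also have "\<dots> = (if r = c then \<i> * complex_of_real (zproj d r) else 0)"
  proof (cases "r = c")
    case True
    have "((of_nat d - 1 - of_nat r) * (of_nat r + 1) + - ((of_nat d - of_nat r) * of_nat r)) / (2 * \<i>)
        = \<i> * complex_of_real (zproj d r)"
      by (simp add: zproj_def spin_of_def field_simps)
    then show ?thesis
      unfolding up down using True by (simp only: add_divide_distrib simp_thms if_True)
  qed (use up down in simp)
  finally show ?thesis .
qed

section \<open>The rank-2 tensor operator\<close>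

definition inv_fact :: "int \<Rightarrow> real" where
  "inv_fact x = (if x < 0 then 0 else 1 / fact (nat x))"

lemma hinvfact_double: "a = 2 * x \<Longrightarrow> hinvfact a = inv_fact x"
  by (simp add: hinvfact_def inv_fact_def)

lemma hfact_double: "a = 2 * int k \<Longrightarrow> hfact a = fact k"
  by (simp add: hfact_def)

lemma fact_mult_inv_fact: "fact a * inv_fact (int a) = 1"
  by (simp add: inv_fact_def)

lemma fact_mult_inv_fact_minus_1: "fact a * inv_fact (int a - 1) = real a"
  by (cases a) (simp_all add: inv_fact_def)

lemma fact_mult_inv_fact_minus_2: "fact a * inv_fact (int a - 2) = real a * (real a - 1)"
proof (cases a)
  case (Suc m)
  then show ?thesis
  proof (cases m)
    case (Suc k)
    then have "nat (int a - 2) = k"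
      using \<open>a = Suc m\<close> by simp
    then show ?thesis
      using Suc \<open>a = Suc m\<close> by (simp add: inv_fact_def algebra_simps)
  qed (simp add: inv_fact_def)
qed (simp add: inv_fact_def)

definition quadrupole :: "nat \<Rightarrow> nat \<Rightarrow> real" where
  "quadrupole d c = 3 * zproj d c ^ 2 - spin_of d * (spin_of d + 1)"

definition T20_scale :: "nat \<Rightarrow> real" where
  "T20_scale d = sqrt (5 / real d) * sqrt (int d * hfact 4 * hfact (2 * (int d - 1) - 4) * hfact 4
      / hfact (2 * (int d - 1) + 6))"

lemma T20_scale_pos: "d \<ge> 3 \<Longrightarrow> T20_scale d > 0"
  unfolding T20_scale_def by (intro mult_pos_pos real_sqrt_gt_zero divide_pos_pos) (auto simp: hfact_def)

text \<open>The Racah sum of \<open>clebsch_gordan\<close> for \<open><J m; 2 0 | J m>\<close> with \<open>n = 2J\<close>, in the shape produced by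
  unfolding the definition; only the terms \<open>k = 0, 1, 2\<close> survive.\<close>
lemma racah_sum_rank2_diag:
  assumes m: "m = 2 * int c - n" and b: "int b = n - int c"
  shows "(\<Sum>k\<in>{0..(4 + n - n) div 2}. (-1) ^ nat k
      * hinvfact (2 * k) * hinvfact (4 + n - n - 2 * k) * hinvfact (4 - 0 - 2 * k)
      * hinvfact (n + m - 2 * k) * hinvfact (n - n + 0 + 2 * k) * hinvfact (n - 4 - m + 2 * k))
    = inv_fact (int c) * inv_fact (int b - 2) / 4 - inv_fact (int c - 1) * inv_fact (int b - 1)
      + inv_fact (int c - 2) * inv_fact (int b) / 4"
proof -
  define g where "g k = (-1) ^ nat k * inv_fact k * inv_fact (2 - k) * inv_fact (2 - k) * inv_fact (int c - k)
    * inv_fact k * inv_fact (int b - 2 + k)" for k :: int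
  have termwise: "(-1) ^ nat k
      * hinvfact (2 * k) * hinvfact (4 + n - n - 2 * k) * hinvfact (4 - 0 - 2 * k)
      * hinvfact (n + m - 2 * k) * hinvfact (n - n + 0 + 2 * k) * hinvfact (n - 4 - m + 2 * k) = g k" for k
  proof -
    have "hinvfact (2 * k) = inv_fact k"
      and "hinvfact (4 + n - n - 2 * k) = inv_fact (2 - k)"
      and "hinvfact (4 - 0 - 2 * k) = inv_fact (2 - k)"
      and "hinvfact (n + m - 2 * k) = inv_fact (int c - k)"
      and "hinvfact (n - n + 0 + 2 * k) = inv_fact k"
      and "hinvfact (n - 4 - m + 2 * k) = inv_fact (int b - 2 + k)"
      by (rule hinvfact_double; simp add: m b)+
    then show ?thesis
      by (simp add: g_def)
  qed
  have "(\<Sum>k\<in>{0..(4 + n - n) div 2}. (-1) ^ nat k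
      * hinvfact (2 * k) * hinvfact (4 + n - n - 2 * k) * hinvfact (4 - 0 - 2 * k)
      * hinvfact (n + m - 2 * k) * hinvfact (n - n + 0 + 2 * k) * hinvfact (n - 4 - m + 2 * k))
    = (\<Sum>k\<in>{0, 1, 2}. g k)"
  proof (rule sum.cong)
    show "{0..(4 + n - n) div 2} = {0, 1, 2::int}"
      by auto
  qed (rule termwise)
  moreover have "inv_fact 0 = 1" "inv_fact 1 = 1" "inv_fact 2 = 1 / 2"
    by (simp_all add: inv_fact_def)
  ultimately show ?thesis
    by (simp add: g_def)
qed

lemma fact_mult_racah_rank2:
  "2 * fact c * fact b * (inv_fact (int c) * inv_fact (int b - 2) / 4 - inv_fact (int c - 1) * inv_fact (int b - 1)
      + inv_fact (int c - 2) * inv_fact (int b) / 4)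
    = (real c * (real c - 1) + real b * (real b - 1) - 4 * real c * real b) / 2"
proof -
  have "2 * fact c * fact b * (inv_fact (int c) * inv_fact (int b - 2) / 4 - inv_fact (int c - 1) * inv_fact (int b - 1)
      + inv_fact (int c - 2) * inv_fact (int b) / 4)
    = ((fact c * inv_fact (int c)) * (fact b * inv_fact (int b - 2))
      - 4 * (fact c * inv_fact (int c - 1)) * (fact b * inv_fact (int b - 1))
      + (fact c * inv_fact (int c - 2)) * (fact b * inv_fact (int b))) / 2"
    by (simp add: algebra_simps)
  then show ?thesis
    by (simp add: fact_mult_inv_fact fact_mult_inv_fact_minus_1 fact_mult_inv_fact_minus_2 algebra_simps)
qed

lemma clebsch_gordan_rank2_diag:
  assumes d3: "d \<ge> 3" and c: "c < d"
  shows "sqrt (5 / real d) * clebsch_gordan 4 0 (int d - 1) (two_m d c) (int d - 1) (two_m d c)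
     = T20_scale d * quadrupole d c"
proof -
  define n where "n = int d - 1"
  define b where "b = d - 1 - c"
  have bn: "int b = n - int c" using c by (simp add: n_def b_def)
  have tm: "two_m d c = 2 * int c - n" by (simp add: two_m_def n_def)
  have cond: "two_m d c = 0 + two_m d c \<and> \<bar>0::int\<bar> \<le> 4 \<and> \<bar>two_m d c\<bar> \<le> n \<and> \<bar>two_m d c\<bar> \<le> n
        \<and> \<bar>4 - n\<bar> \<le> n \<and> n \<le> 4 + n
        \<and> even (4 + (0::int)) \<and> even (n + two_m d c) \<and> even (n + two_m d c) \<and> even (4 + n + n)"
  proof -
    have "n \<ge> 2" "int c \<le> n"
      using d3 c by (simp_all add: n_def)
    then show ?thesis
      by (simp add: tm abs_le_iff)
  qed
  have "hfact (n + two_m d c) = fact c" "hfact (n - two_m d c) = fact b"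
    by (rule hfact_double; simp add: tm bn)+
  moreover have "hfact (4 - 0) = 2" "hfact (4 + 0) = 2"
    by (simp_all add: hfact_def)
  ultimately have "hfact (n + two_m d c) * hfact (n - two_m d c) * hfact (4 - 0) * hfact (4 + 0)
      * hfact (n - two_m d c) * hfact (n + two_m d c) = (2 * fact c * fact b)\<^sup>2"
    by (simp add: power2_eq_square)
  then have sqrt_hfacts: "sqrt (hfact (n + two_m d c) * hfact (n - two_m d c) * hfact (4 - 0) * hfact (4 + 0)
      * hfact (n - two_m d c) * hfact (n + two_m d c)) = 2 * fact c * fact b"
    by simp
  have "clebsch_gordan 4 0 (int d - 1) (two_m d c) (int d - 1) (two_m d c)
     = sqrt ((real_of_int n + 1) * hfact (n + 4 - n) * hfact (n - 4 + n) * hfact (4 + n - n)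
                / hfact (4 + n + n + 2)) * (2 * fact c * fact b)
       * (inv_fact (int c) * inv_fact (int b - 2) / 4 - inv_fact (int c - 1) * inv_fact (int b - 1)
          + inv_fact (int c - 2) * inv_fact (int b) / 4)"
    using cond unfolding clebsch_gordan_def n_def[symmetric]
    by (simp only: if_True sqrt_hfacts racah_sum_rank2_diag[OF tm bn] simp_thms)
  also have "(real_of_int n + 1) * hfact (n + 4 - n) * hfact (n - 4 + n) * hfact (4 + n - n) / hfact (4 + n + n + 2)
      = int d * hfact 4 * hfact (2 * (int d - 1) - 4) * hfact 4 / hfact (2 * (int d - 1) + 6)"
    by (simp add: n_def algebra_simps)
  finally have cg: "clebsch_gordan 4 0 (int d - 1) (two_m d c) (int d - 1) (two_m d c)
     = sqrt (int d * hfact 4 * hfact (2 * (int d - 1) - 4) * hfact 4 / hfact (2 * (int d - 1) + 6))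
       * (2 * fact c * fact b)
       * (inv_fact (int c) * inv_fact (int b - 2) / 4 - inv_fact (int c - 1) * inv_fact (int b - 1)
          + inv_fact (int c - 2) * inv_fact (int b) / 4)" .
  have "(real c * (real c - 1) + real b * (real b - 1) - 4 * real c * real b) / 2 = quadrupole d c"
    using c by (simp add: b_def of_nat_diff quadrupole_def zproj_def spin_of_def field_simps power2_eq_square)
  then have racah: "2 * fact c * fact b * (inv_fact (int c) * inv_fact (int b - 2) / 4
      - inv_fact (int c - 1) * inv_fact (int b - 1) + inv_fact (int c - 2) * inv_fact (int b) / 4) = quadrupole d c"
    by (simp only: fact_mult_racah_rank2)
  show ?thesis
    unfolding cg T20_scale_def by (simp only: mult.assoc racah[unfolded mult.assoc])
qed

lemma T_tensor_carrier: "T_tensor d k q \<in> carrier_mat d d"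
  by (simp add: T_tensor_def)

lemma T_tensor_2_0_index:
  assumes "d \<ge> 3" "r < d" "c < d"
  shows "T_tensor d 2 0 $$ (r, c) = (if r = c then complex_of_real (T20_scale d * quadrupole d c) else 0)"
  using assms by (simp add: T_tensor_def clebsch_gordan_rank2_diag[symmetric])

lemma sum_quadrupole: "(\<Sum>c<d. quadrupole d c) = 0"
proof -
  have sum_id: "(\<Sum>c<m. real c) = real m * (real m - 1) / 2" for m
    by (induction m) (simp_all add: field_simps)
  have sum_sq: "(\<Sum>c<m. real c * real c) = real m * (real m - 1) * (2 * real m - 1) / 6" for m
    by (induction m) (simp_all add: field_simps)
  have "(\<Sum>c<d. quadrupole d c)
      = (\<Sum>c<d. 3 * (real c * real c) - 3 * (real d - 1) * real c + ((real d - 1)^2 - (real d - 1)) / 2)"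
    by (rule sum.cong) (auto simp: quadrupole_def zproj_def spin_of_def field_simps power2_eq_square)
  also have "\<dots> = 3 * (\<Sum>c<d. real c * real c) - 3 * (real d - 1) * (\<Sum>c<d. real c)
      + real d * (((real d - 1)^2 - (real d - 1)) / 2)"
    by (simp add: sum.distrib sum_subtractf sum_distrib_left)
  also have "\<dots> = 0"
    unfolding sum_id sum_sq by (simp add: field_simps power2_eq_square)
  finally show ?thesis .
qed

section \<open>The algebra generated by the rotations and the quadrupole\<close>

abbreviation spin_algebra :: "nat \<Rightarrow> complex mat set" where
  "spin_algebra d \<equiv> lie_generated d {J_x d, J_y d, T_tensor d 2 0}"

lemma generators_carrier: "{J_x d, J_y d, T_tensor d 2 0} \<subseteq> carrier_mat d d"
  using J_x_carrier J_y_carrier T_tensor_carrier by auto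

lemma generators_in_su:
  assumes d: "d \<ge> 3" and H: "H \<in> {J_x d, J_y d, T_tensor d 2 0}"
  shows "(- \<i>) \<cdot>\<^sub>m H \<in> su d"
proof -
  have "(\<Sum>i<d. T_tensor d 2 0 $$ (i, i)) = complex_of_real (T20_scale d * (\<Sum>i<d. quadrupole d i))"
    by (simp add: T_tensor_2_0_index[OF d] sum_distrib_left)
  then have "(\<Sum>i<d. T_tensor d 2 0 $$ (i, i)) = 0"
    by (simp add: sum_quadrupole)
  then show ?thesis
    using H by (auto intro!: minus_i_hermitian_in_su simp: J_x_carrier J_y_carrier T_tensor_carrier
        J_x_hermitian J_y_hermitian J_x_index J_y_index T_tensor_2_0_index[OF d])
qed

definition diag_eig :: "nat \<Rightarrow> nat \<Rightarrow> real" where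
  "diag_eig d r = T20_scale d * (quadrupole d r + 3 / 2 * zproj d r)"

text \<open>The spectrum of T^(2)_0 is symmetric under m \<mapsto> -m, so its gaps between neighbouring levels occur
  in equal pairs; the admixture of J_z = -i[J_x, J_y] breaks this symmetry.\<close>
definition diag_gen :: "nat \<Rightarrow> complex mat" where
  "diag_gen d = (- \<i>) \<cdot>\<^sub>m T_tensor d 2 0 + complex_of_real (3 * T20_scale d / 2) \<cdot>\<^sub>m
     (((- \<i>) \<cdot>\<^sub>m J_x d) * ((- \<i>) \<cdot>\<^sub>m J_y d) - ((- \<i>) \<cdot>\<^sub>m J_y d) * ((- \<i>) \<cdot>\<^sub>m J_x d))"

lemma diag_gen_in_spin_algebra: "diag_gen d \<in> spin_algebra d"
  unfolding diag_gen_def by (intro lie_generated.add lie_generated.smult lie_generated.comm lie_generated.gen) auto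

lemma diag_gen_index:
  assumes d: "d \<ge> 3" and rc: "r < d" "c < d"
  shows "diag_gen d $$ (r, c) = (if r = c then - \<i> * complex_of_real (diag_eig d r) else 0)"
proof -
  have "((- \<i>) \<cdot>\<^sub>m J_x d) * ((- \<i>) \<cdot>\<^sub>m J_y d) - ((- \<i>) \<cdot>\<^sub>m J_y d) * ((- \<i>) \<cdot>\<^sub>m J_x d)
      = (- 1) \<cdot>\<^sub>m (J_x d * J_y d - J_y d * J_x d)"
    using J_x_carrier[of d] J_y_carrier[of d]
    by (intro eq_matI) (simp_all add: mult_smult_assoc_mat mult_smult_distrib)
  then have "diag_gen d $$ (r, c) = - \<i> * T_tensor d 2 0 $$ (r, c)
      + complex_of_real (3 * T20_scale d / 2) * (- 1 * (J_x d * J_y d - J_y d * J_x d) $$ (r, c))"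
    using rc J_x_carrier[of d] J_y_carrier[of d] T_tensor_carrier[of d 2 0]
    unfolding diag_gen_def by (simp del: index_minus_mat(1))
  also have "\<dots> = - \<i> * (if r = c then complex_of_real (T20_scale d * quadrupole d c) else 0)
      + complex_of_real (3 * T20_scale d / 2) * (- 1 * (if r = c then \<i> * complex_of_real (zproj d r) else 0))"
    by (simp only: T_tensor_2_0_index[OF d rc] commutator_J_x_J_y_index[OF rc])
  finally show ?thesis
    by (cases "r = c") (simp_all add: diag_eig_def field_simps)
qed

text \<open>The gap \<open>2d - 5 - 4c\<close> is odd: it never vanishes, and two such gaps of equal square coincide.\<close>
lemma diag_eig_gap: "diag_eig d c - diag_eig d (c + 1) = 3 * T20_scale d / 2 * (2 * real d - 5 - 4 * real c)"
  by (simp add: diag_eig_def quadrupole_def zproj_def spin_of_def field_simps power2_eq_square)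

lemma diag_eig_gap_nonzero:
  assumes "d \<ge> 3"
  shows "diag_eig d c - diag_eig d (c + 1) \<noteq> 0"
proof -
  have "2 * real d - 5 - 4 * real c \<noteq> 0"
  proof
    assume "2 * real d - 5 - 4 * real c = 0"
    then have "2 * d = 4 * c + 5"
      by linarith
    then show False
      by presburger
  qed
  then show ?thesis
    unfolding diag_eig_gap using T20_scale_pos[OF assms] by simp
qed

lemma diag_eig_gap_sq_inj:
  assumes "d \<ge> 3" "(diag_eig d c - diag_eig d (c + 1))\<^sup>2 = (diag_eig d c' - diag_eig d (c' + 1))\<^sup>2"
  shows "c = c'"
proof -
  have "(3 * T20_scale d / 2)\<^sup>2 * (2 * real d - 5 - 4 * real c)\<^sup>2
      = (3 * T20_scale d / 2)\<^sup>2 * (2 * real d - 5 - 4 * real c')\<^sup>2"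
    using assms(2) unfolding diag_eig_gap power_mult_distrib .
  then have "(2 * real d - 5 - 4 * real c)\<^sup>2 = (2 * real d - 5 - 4 * real c')\<^sup>2"
    using T20_scale_pos[OF assms(1)] by simp
  then have "2 * real d - 5 - 4 * real c = 2 * real d - 5 - 4 * real c'
      \<or> 2 * real d - 5 - 4 * real c = - (2 * real d - 5 - 4 * real c')"
    using power2_eq_iff by blast
  then show ?thesis
  proof
    assume "2 * real d - 5 - 4 * real c = - (2 * real d - 5 - 4 * real c')"
    then have "4 * d = 4 * c + 4 * c' + 10"
      by linarith
    then show ?thesis
      by presburger
  qed simp
qed

definition adjacent_part :: "nat \<Rightarrow> nat \<Rightarrow> complex mat" where
  "adjacent_part d c = mat d d (\<lambda>(r, s).
     if (diag_eig d r - diag_eig d s)\<^sup>2 = (diag_eig d c - diag_eig d (c + 1))\<^sup>2 then ((- \<i>) \<cdot>\<^sub>m J_x d) $$ (r, s) else 0)"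

lemma adjacent_part_carrier: "adjacent_part d c \<in> carrier_mat d d"
  by (simp add: adjacent_part_def)

lemma adjacent_part_in_spin_algebra:
  assumes d: "d \<ge> 3" and c: "c + 1 < d"
  shows "adjacent_part d c \<in> spin_algebra d"
proof -
  let ?w = "\<lambda>(r, s). - (diag_eig d r - diag_eig d s)\<^sup>2"
  have "mat d d (\<lambda>(r, s). if ?w (r, s) = ?w (c, c + 1) then ((- \<i>) \<cdot>\<^sub>m J_x d) $$ (r, s) else 0) \<in> spin_algebra d"
  proof (rule lie_generated_weight_component[OF generators_carrier])
    show "mat d d (\<lambda>(r, s). complex_of_real (?w (r, s)) * A $$ (r, s)) \<in> spin_algebra d"
      if "A \<in> spin_algebra d" for A
      using lie_generated_ad_sq_diagonal[OF generators_carrier diag_gen_in_spin_algebra diag_gen_index[OF d] that]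
      by simp
    show "finite (?w ` ({..<d} \<times> {..<d}))" "(- \<i>) \<cdot>\<^sub>m J_x d \<in> spin_algebra d"
      "\<forall>r<d. \<forall>s<d. ((- \<i>) \<cdot>\<^sub>m J_x d) $$ (r, s) \<noteq> 0 \<longrightarrow> ?w (r, s) \<in> ?w ` ({..<d} \<times> {..<d})"
      "?w (c, c + 1) \<in> ?w ` ({..<d} \<times> {..<d})"
      using c by (auto intro: lie_generated.gen)
  qed
  then show ?thesis
    by (simp add: adjacent_part_def)
qed

lemma adjacent_part_index:
  assumes d: "d \<ge> 3" and rs: "r < d" "s < d"
  shows "adjacent_part d c $$ (r, s)
    = (if (r = c \<and> s = c + 1) \<or> (r = c + 1 \<and> s = c) then - \<i> * complex_of_real (ladder d c) / 2 else 0)"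
proof -
  have "adjacent_part d c $$ (r, s)
      = (if (diag_eig d r - diag_eig d s)\<^sup>2 = (diag_eig d c - diag_eig d (c + 1))\<^sup>2 then - \<i> * J_x d $$ (r, s) else 0)"
    using rs J_x_carrier[of d] by (simp add: adjacent_part_def)
  moreover have "(diag_eig d r - diag_eig d (r + 1))\<^sup>2 = (diag_eig d c - diag_eig d (c + 1))\<^sup>2 \<longleftrightarrow> r = c"
    and "(diag_eig d (s + 1) - diag_eig d s)\<^sup>2 = (diag_eig d c - diag_eig d (c + 1))\<^sup>2 \<longleftrightarrow> s = c"
    using diag_eig_gap_sq_inj[OF d] by (auto simp: power2_commute)
  ultimately show ?thesis
    using rs by (auto simp: J_x_index)
qed

lemma sym_unit_adjacent_in_spin_algebra:
  assumes d: "d \<ge> 3" and c: "c + 1 < d"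
  shows "sym_unit d c (c + 1) \<in> spin_algebra d"
proof -
  have rescaled: "complex_of_real (- ladder d c / 2) \<cdot>\<^sub>m sym_unit d c (c + 1) = adjacent_part d c"
    using adjacent_part_carrier[of d c]
    by (intro eq_matI) (auto simp: adjacent_part_index[OF d] sym_unit_index)
  show ?thesis
    by (rule lie_generated_smult_cancel[OF generators_carrier _ adjacent_part_in_spin_algebra[OF d c, folded rescaled]])
       (use ladder_pos[OF c] in simp_all)
qed

lemma skew_unit_adjacent_in_spin_algebra:
  assumes d: "d \<ge> 3" and c: "c + 1 < d"
  shows "skew_unit d c (c + 1) \<in> spin_algebra d"
proof -
  define P where "P = adjacent_part d c"
  define Q where "Q = diag_gen d * P - P * diag_gen d"
  define gap where "gap = diag_eig d c - diag_eig d (c + 1)"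
  have Q: "Q \<in> spin_algebra d"
    unfolding Q_def P_def
    by (intro lie_generated.comm diag_gen_in_spin_algebra adjacent_part_in_spin_algebra[OF d c])
  have Q_index: "Q $$ (r, s) = (- \<i> * complex_of_real (diag_eig d r) - - \<i> * complex_of_real (diag_eig d s)) * P $$ (r, s)"
    if "r < d" "s < d" for r s
    unfolding Q_def
    by (rule commutator_diagonal_entry[OF lie_generated_carrier[OF generators_carrier diag_gen_in_spin_algebra]
        _ diag_gen_index[OF d] that]) (simp add: P_def adjacent_part_carrier)
  have rescaled: "complex_of_real (- gap * ladder d c / 2) \<cdot>\<^sub>m skew_unit d c (c + 1) = Q"
  proof (rule eq_matI)
    fix r s
    assume "r < dim_row Q" "s < dim_col Q"
    then have rs: "r < d" "s < d"
      using lie_generated_carrier[OF generators_carrier Q] by simp_all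
    then show "(complex_of_real (- gap * ladder d c / 2) \<cdot>\<^sub>m skew_unit d c (c + 1)) $$ (r, s) = Q $$ (r, s)"
      by (auto simp: Q_index[OF rs] P_def adjacent_part_index[OF d rs] skew_unit_index gap_def field_simps)
  qed (use lie_generated_carrier[OF generators_carrier Q] in simp_all)
  have "gap \<noteq> 0"
    using diag_eig_gap_nonzero[OF d, of c] by (simp add: gap_def)
  show ?thesis
    by (rule lie_generated_smult_cancel[OF generators_carrier _ Q[folded rescaled]])
       (use \<open>gap \<noteq> 0\<close> ladder_pos[OF c] in simp_all)
qed

theorem lemma1:
  fixes d :: nat
  assumes "d > 2"
  shows "lie_generated d {J_x d, J_y d, T_tensor d 2 0} = su d"
proof
  have d: "d \<ge> 3"
    using assms by simp
  show "spin_algebra d \<subseteq> su d"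
    by (rule lie_generated_subset_su) (use generators_in_su[OF d] in blast)
  show "su d \<subseteq> spin_algebra d"
    by (rule su_subset_lie_generated[OF generators_carrier])
       (use sym_unit_adjacent_in_spin_algebra[OF d] skew_unit_adjacent_in_spin_algebra[OF d] in blast)
qed

end
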